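(* Let $\mathfrak a\subset K$ be a fractional $A_{\infty_1}$-ideal having an $\mathbb F_q$-basis $(\alpha_0=1,\alpha_1,\alpha_2,\dots)$ with $1<|\alpha_1|<|\alpha_2|<\cdots$. For $i\ge1$ and $m\in\mathbb N$ set \[\Omega_i^{\mathfrak a}(m)=\sum_{(c_0,\dots,c_{i-1})\in\mathbb F_q^i}\big(c_0+c_1\alpha_1+\dots+c_{i-1}\alpha_{i-1}+\alpha_i\big)^{-m}.\] Then for every $n\in\mathbb N$, $n\ge1$: (1) $\displaystyle\Omega_1^{\mathfrak a}(q^n-1)=\frac{\alpha_1^{q^n}-\alpha_1}{\prod_{c\in\mathbb F_q}(c+\alpha_1^{q^n})}$ and $|\Omega_1^{\mathfrak a}(q^n-1)|=|\alpha_1|^{q^n(1-q)}$; (2) for all $i\ge1$, $|\Omega_i^{\mathfrak a}(q^n-1)|\le|\alpha_i|^{q^n(1-q)}$.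
   Context: Let $q$ be a prime power, $k=\mathbb F_q(T)$, $A=\mathbb F_q[T]$, $k_\infty=\mathbb F_q((1/T))$ with $|x|=q^{\deg_T x}$. Let $f\in k_\infty\setminus k$ be a root of $X^2-aX-b$ with $a\in A$ monic, $d=\deg_T a\ge1$, $b\in\mathbb F_q^*$, $|f|=q^d$. Let $K=k(f)\subset k_\infty$ (absolute values of elements of $K$ are computed in $k_\infty$), and $A_{\infty_1}=\mathbb F_q[f,fT,\dots,fT^{d-1}]$ the ring of elements of $K$ regular away from the place induced by $K\subset k_\infty$. *)

theory Defs
  imports "HOL-Computational_Algebra.Formal_Laurent_Series" "HOL-Library.FuncSet" "HOL-Library.Cardinality"
begin

text \<open>k_infinity = F_q((1/T)) is modelled as the type of formal Laurent series
  'a fls in the variable X = 1/T over a finite field 'a = F_q; hence T = fls_X_inv.\<close>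

definition Tvar :: "'a::field fls" where
  "Tvar = fls_X_inv"

text \<open>|x| = q^(deg_T x) = q^(- v_{1/T}(x)), and |0| = 0.\<close>
definition absinf :: "'a::{finite,field} fls \<Rightarrow> real" where
  "absinf x = (if x = 0 then 0 else real CARD('a) powi (- fls_subdegree x))"

definition Tpoly :: "'a::field poly \<Rightarrow> 'a fls" where
  "Tpoly p = (\<Sum>i\<le>degree p. fls_const (coeff p i) * Tvar ^ i)"

definition Aring :: "'a::field fls set" where
  "Aring = range Tpoly"

definition kfield :: "'a::field fls set" where
  "kfield = {u / v | u v. u \<in> Aring \<and> v \<in> Aring \<and> v \<noteq> 0}"

definition Kfield :: "'a::field fls \<Rightarrow> 'a fls set" where
  "Kfield f = {u + v * f | u v. u \<in> kfield \<and> v \<in> kfield}"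

inductive_set Ainf1 :: "'a::field fls \<Rightarrow> nat \<Rightarrow> 'a fls set" for f d where
  const: "fls_const c \<in> Ainf1 f d"
| gen: "j < d \<Longrightarrow> f * Tvar ^ j \<in> Ainf1 f d"
| add: "x \<in> Ainf1 f d \<Longrightarrow> y \<in> Ainf1 f d \<Longrightarrow> x + y \<in> Ainf1 f d"
| mult: "x \<in> Ainf1 f d \<Longrightarrow> y \<in> Ainf1 f d \<Longrightarrow> x * y \<in> Ainf1 f d"

definition frac_ideal :: "'a::field set \<Rightarrow> 'a set \<Rightarrow> 'a set \<Rightarrow> bool" where
  "frac_ideal R K I \<longleftrightarrow> I \<subseteq> K \<and> 0 \<in> I \<and> (\<exists>x\<in>I. x \<noteq> 0) \<and>
     (\<forall>x\<in>I. \<forall>y\<in>I. x + y \<in> I) \<and> (\<forall>r\<in>R. \<forall>x\<in>I. r * x \<in> I) \<and>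
     (\<exists>c\<in>R. c \<noteq> 0 \<and> (\<forall>x\<in>I. c * x \<in> R))"

definition Fq_basis :: "(nat \<Rightarrow> 'a::field fls) \<Rightarrow> 'a fls set \<Rightarrow> bool" where
  "Fq_basis \<alpha> I \<longleftrightarrow> (\<forall>i. \<alpha> i \<in> I) \<and>
     (\<forall>x\<in>I. \<exists>!c::nat \<Rightarrow> 'a. finite {i. c i \<noteq> 0} \<and>
        x = (\<Sum>i\<in>{i. c i \<noteq> 0}. fls_const (c i) * \<alpha> i))"

definition Omega :: "(nat \<Rightarrow> 'a::{finite,field} fls) \<Rightarrow> nat \<Rightarrow> nat \<Rightarrow> 'a fls" where
  "Omega \<alpha> i m = (\<Sum>c\<in>({..<i} \<rightarrow>\<^sub>E (UNIV::'a set)).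
      inverse ((\<Sum>j<i. fls_const (c j) * \<alpha> j) + \<alpha> i) ^ m)"

end

theory Submission
  imports Defs
begin

(* Since prod_c (X + c) = X^q - X over F_q, Frobenius gives (c + z)^(q^n) = c + z^(q^n), hence
   (c + z)^(1 - q^n) = 1 + (z - y)/(c + y) with y = z^(q^n); differentiating the same product gives
   sum_c 1/(c + y) = -1/prod_c (c + y).  Summing over c yields the closed form of Omega_1, and for
   |z| > 1 the ultrametric inequality evaluates its absolute value as |y|/|y|^q = |z|^(q^n (1 - q)).
   For i >= 1, summing first over the coefficient of alpha_0 = 1 writes Omega_i as a sum of such
   expressions at points z with |z| = |alpha_i|, and the ultrametric inequality bounds the sum. *)

lemma card_UNIV_ge_2: "CARD('a::{finite,field}) \<ge> 2"
proof -
  have "card {0::'a, 1} \<le> CARD('a)" by (rule card_mono) auto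
  thus ?thesis by simp
qed

lemma power_card_eq_self:
  fixes x :: "'a::{finite,field}"
  shows "x ^ CARD('a) = x"
proof (cases "x = 0")
  case False
  \<comment> \<open>multiplication by \<open>x\<close> permutes the nonzero elements\<close>
  have "x * (\<Prod>y\<in>UNIV-{0}. x * y) = x * x ^ (CARD('a) - 1) * \<Prod>(UNIV-{0})"
    by (simp add: prod.distrib mult_ac)
  also have "x * x ^ (CARD('a) - 1) = x ^ CARD('a)"
    using finite_UNIV_card_ge_0[where ?'a = 'a] by (simp flip: power_Suc)
  also have "(\<Prod>y\<in>UNIV-{0}. x * y) = (\<Prod>y\<in>UNIV-{0}. y)"
    by (rule prod.reindex_bij_witness[of _ "\<lambda>y. y / x" "\<lambda>y. x * y"]) (use False in auto)
  finally show ?thesis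
    by simp
qed (use finite_UNIV_card_ge_0[where ?'a = 'a] in auto)

lemma of_nat_card_eq_0: "(of_nat CARD('a) :: 'a::{finite,field}) = 0"
proof -
  have "(\<Sum>c\<in>(UNIV::'a set). c + 1) = (\<Sum>c\<in>UNIV. c)"
    by (rule sum.reindex_bij_witness[of _ "\<lambda>c. c - 1" "\<lambda>c. c + 1"]) auto
  thus ?thesis by (simp add: sum.distrib)
qed

lemma absinf_nonneg: "absinf x \<ge> 0"
  by (simp add: absinf_def)

lemma absinf_0 [simp]: "absinf 0 = 0"
  by (simp add: absinf_def)

lemma absinf_mult: "absinf (x * y) = absinf x * absinf y"
proof (cases "x = 0 \<or> y = 0")
  case False
  have "real CARD('a) powi (- fls_subdegree x + - fls_subdegree y)
      = real CARD('a) powi (- fls_subdegree x) * real CARD('a) powi (- fls_subdegree y)"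
    by (rule power_int_add) simp
  with False show ?thesis by (simp add: absinf_def)
qed auto

lemma absinf_1 [simp]: "absinf 1 = 1"
  by (simp add: absinf_def)

lemma absinf_inverse: "absinf (inverse x) = inverse (absinf x)"
proof (cases "x = 0")
  case False
  then have "absinf x * absinf (inverse x) = 1"
    by (simp flip: absinf_mult)
  then show ?thesis by (rule inverse_unique[symmetric])
qed simp

lemma absinf_divide: "absinf (x / y) = absinf x / absinf y"
  by (simp add: divide_inverse absinf_mult absinf_inverse)

lemma absinf_power: "absinf (x ^ n) = absinf x ^ n"
  by (induction n) (simp_all add: absinf_mult)

lemma absinf_prod: "absinf (\<Prod>a\<in>A. F a) = (\<Prod>a\<in>A. absinf (F a))"
  by (induction A rule: infinite_finite_induct) (simp_all add: absinf_mult)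

lemma absinf_minus [simp]: "absinf (- x) = absinf x"
  by (simp add: absinf_def)

lemma absinf_le_iff:
  fixes x y :: "'a::{finite,field} fls"
  assumes "x \<noteq> 0" "y \<noteq> 0"
  shows "absinf x \<le> absinf y \<longleftrightarrow> fls_subdegree y \<le> fls_subdegree x"
proof -
  have q: "real CARD('a) > 1" using card_UNIV_ge_2[where 'a='a] by simp
  have "real CARD('a) powi (- fls_subdegree x) \<le> real CARD('a) powi (- fls_subdegree y)
        \<longleftrightarrow> - fls_subdegree x \<le> - fls_subdegree y"
    using power_int_increasing[OF _ less_imp_le[OF q]] power_int_strict_increasing[OF _ q]
    by (meson not_le)
  with assms show ?thesis by (simp add: absinf_def)
qed

lemma absinf_add_le_max: "absinf (x + y) \<le> max (absinf x) (absinf y)"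
proof (cases "x = 0 \<or> y = 0 \<or> x + y = 0")
  case True
  then show ?thesis by (auto simp: absinf_nonneg le_max_iff_disj)
next
  case False
  then have "min (fls_subdegree x) (fls_subdegree y) \<le> fls_subdegree (x + y)"
    by (simp add: fls_plus_subdegree)
  with False show ?thesis
    by (auto simp: absinf_le_iff le_max_iff_disj min_le_iff_disj)
qed

lemma absinf_add_eq_right:
  assumes "absinf x < absinf y"
  shows "absinf (x + y) = absinf y"
proof (rule antisym)
  show "absinf (x + y) \<le> absinf y"
    using absinf_add_le_max[of x y] assms by simp
  show "absinf y \<le> absinf (x + y)"
    using absinf_add_le_max[of "x + y" "- x"] assms by (auto simp: max_def split: if_splits)
qed

lemma absinf_sum_le:
  assumes "\<And>a. a \<in> A \<Longrightarrow> absinf (F a) \<le> B" and "B \<ge> 0"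
  shows "absinf (\<Sum>a\<in>A. F a) \<le> B"
  using assms
proof (induction A rule: infinite_finite_induct)
  case (insert a A)
  then have "max (absinf (F a)) (absinf (sum F A)) \<le> B" by simp
  then show ?case
    unfolding sum.insert[OF insert(1,2)] by (rule order.trans[OF absinf_add_le_max])
qed simp_all

lemma absinf_sum_less:
  assumes "\<And>a. a \<in> A \<Longrightarrow> absinf (F a) < B" and "B > 0"
  shows "absinf (\<Sum>a\<in>A. F a) < B"
  using assms
proof (induction A rule: infinite_finite_induct)
  case (insert a A)
  then have "max (absinf (F a)) (absinf (sum F A)) < B" by simp
  then show ?case
    unfolding sum.insert[OF insert(1,2)] by (rule order.strict_trans1[OF absinf_add_le_max])
qed simp_all

lemma absinf_const_le_1: "absinf (fls_const c) \<le> 1"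
  by (simp add: absinf_def)

lemma absinf_const_add:
  assumes "absinf y > 1"
  shows "absinf (fls_const c + y) = absinf y"
  using absinf_add_eq_right[of "fls_const c" y] absinf_const_le_1[of c] assms by simp

lemma fls_const_add_nonzero:
  assumes "absinf y > 1"
  shows "fls_const c + y \<noteq> 0"
  using absinf_const_add[OF assms, of c] assms by auto

lemma inj_fls_const: "inj fls_const"
  by (rule injI) (metis fls_const_nth)

lemma prod_pCons_fls_const_eq:
  "(\<Prod>c\<in>UNIV. [:fls_const c, 1:]) = (monom 1 CARD('a) - [:0, 1:] :: 'a::{finite,field} fls poly)"
  (is "?P = ?Q")
proof -
  \<comment> \<open>both sides are monic of degree \<open>q\<close> and vanish at the \<open>q\<close> constants\<close>
  have "lead_coeff ?P = 1"
    by (simp add: lead_coeff_prod)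
  moreover have "degree ?P = CARD('a)"
    by (simp add: degree_prod_sum_eq)
  moreover have "degree ?Q \<le> CARD('a)" "coeff ?Q CARD('a) = 1"
    using card_UNIV_ge_2[where 'a='a]
    by (auto simp: coeff_monom coeff_pCons split: nat.split
             intro!: degree_diff_le degree_monom_le order.trans[OF degree_pCons_le])
  ultimately have "degree (?P - ?Q) \<le> CARD('a)" "coeff (?P - ?Q) CARD('a) = 0"
    by (auto intro: degree_diff_le)
  then have "degree (?P - ?Q) < CARD('a)"
    using card_UNIV_ge_2[where 'a='a]
    by (metis degree_0 le_neq_implies_less leading_coeff_0_iff not_numeral_le_zero)
  moreover have "poly (?P - ?Q) (fls_const c) = 0" for c
  proof -
    have "poly ?P (fls_const c) = 0"
      by (auto simp: poly_prod fls_plus_const intro: exI[where x="-c"])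
    moreover have "poly ?Q (fls_const c) = 0"
      by (simp add: poly_monom power_card_eq_self flip: fls_const_power)
    ultimately show ?thesis by simp
  qed
  moreover have "card (range (fls_const :: 'a \<Rightarrow> 'a fls)) = CARD('a)"
    by (simp add: card_image inj_fls_const)
  ultimately have "?P - ?Q = 0"
    by (intro poly_eqI_degree[where A = "range fls_const"]) auto
  then show ?thesis by simp
qed

lemma prod_fls_const_add_eq:
  fixes w :: "'a::{finite,field} fls"
  shows "(\<Prod>c\<in>UNIV. fls_const c + w) = w ^ CARD('a) - w"
  using arg_cong[OF prod_pCons_fls_const_eq, of "\<lambda>p. poly p w"]
  by (simp add: poly_prod poly_monom)

lemma power_card_add_fls_const:
  fixes z :: "'a::{finite,field} fls"
  shows "(z + fls_const c) ^ CARD('a) = z ^ CARD('a) + fls_const c"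
proof -
  have "(\<Prod>d\<in>UNIV. fls_const d + (z + fls_const c)) = (\<Prod>d\<in>UNIV. fls_const d + z)"
    by (rule prod.reindex_bij_witness[of _ "\<lambda>d. d - c" "\<lambda>d. d + c"])
       (auto simp: fls_plus_const algebra_simps)
  then have "(z + fls_const c) ^ CARD('a) - (z + fls_const c) = z ^ CARD('a) - z"
    by (simp only: prod_fls_const_add_eq)
  then show ?thesis
    by (simp add: diff_eq_eq)
qed

lemma power_card_power_add_fls_const:
  fixes z :: "'a::{finite,field} fls"
  shows "(z + fls_const c) ^ (CARD('a) ^ n) = z ^ (CARD('a) ^ n) + fls_const c"
proof (induction n)
  case (Suc n)
  have "(z + fls_const c) ^ (CARD('a) ^ Suc n) = ((z + fls_const c) ^ (CARD('a) ^ n)) ^ CARD('a)"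
    by (simp only: power_Suc2 power_mult)
  also have "\<dots> = (z ^ (CARD('a) ^ n)) ^ CARD('a) + fls_const c"
    by (simp only: Suc power_card_add_fls_const)
  also have "(z ^ (CARD('a) ^ n)) ^ CARD('a) = z ^ (CARD('a) ^ Suc n)"
    by (simp only: power_Suc2 power_mult)
  finally show ?case .
qed simp

lemma sum_prod_fls_const_add_remove:
  fixes w :: "'a::{finite,field} fls"
  shows "(\<Sum>c\<in>UNIV. \<Prod>d\<in>UNIV - {c}. fls_const d + w) = -1"
proof -
  have "pderiv (\<Prod>c\<in>UNIV. [:fls_const c, 1:]) =
        (\<Sum>c\<in>UNIV. \<Prod>d\<in>UNIV - {c}. [:fls_const d, 1 :: 'a fls:])"
    by (simp add: pderiv_prod pderiv_pCons)
  moreover have "pderiv (\<Prod>c\<in>UNIV. [:fls_const c, 1:]) = (-1 :: 'a fls poly)"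
    using card_UNIV_ge_2[where 'a='a]
    by (simp add: prod_pCons_fls_const_eq pderiv_diff pderiv_monom pderiv_pCons one_pCons
                  fls_of_nat of_nat_card_eq_0)
  ultimately have "poly (\<Sum>c\<in>UNIV. \<Prod>d\<in>UNIV - {c}. [:fls_const d, 1:]) w = -1"
    by (metis poly_1 poly_minus)
  then show ?thesis
    by (simp add: poly_sum poly_prod)
qed

lemma sum_inverse_fls_const_add:
  fixes y :: "'a::{finite,field} fls"
  assumes nz: "\<And>c. fls_const c + y \<noteq> 0"
  shows "(\<Sum>c\<in>UNIV. inverse (fls_const c + y)) = - 1 / (\<Prod>c\<in>UNIV. fls_const c + y)"
proof -
  have "inverse (fls_const c + y) =
        (\<Prod>d\<in>UNIV - {c}. fls_const d + y) / (\<Prod>d\<in>UNIV. fls_const d + y)" for c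
  proof -
    have "(\<Prod>d\<in>UNIV. fls_const d + y) = (fls_const c + y) * (\<Prod>d\<in>UNIV - {c}. fls_const d + y)"
      by (rule prod.remove) auto
    moreover have "(\<Prod>d\<in>UNIV - {c}. fls_const d + y) \<noteq> 0"
      using nz by simp
    ultimately show ?thesis
      using nz[of c] by (simp add: inverse_eq_divide)
  qed
  then show ?thesis
    by (simp add: sum_prod_fls_const_add_remove flip: sum_divide_distrib)
qed

definition inverse_translate_sum :: "nat \<Rightarrow> 'a::{finite,field} fls \<Rightarrow> 'a fls" where
  "inverse_translate_sum m z = (\<Sum>c\<in>UNIV. inverse (fls_const c + z) ^ m)"

lemma inverse_translate_sum_eq:
  fixes z :: "'a::{finite,field} fls"
  assumes nz: "\<And>c. fls_const c + z \<noteq> 0"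
  shows "inverse_translate_sum (CARD('a) ^ n - 1) z =
         (z ^ (CARD('a) ^ n) - z) / (\<Prod>c\<in>UNIV. fls_const c + z ^ (CARD('a) ^ n))"
proof -
  define N where "N = CARD('a) ^ n"
  define y where "y = z ^ N"
  have frob: "fls_const c + y = (fls_const c + z) ^ N" for c
    using power_card_power_add_fls_const[of z c n] by (simp add: N_def y_def add.commute)
  have nzy: "fls_const c + y \<noteq> 0" for c
    using nz[of c] by (simp add: frob)
  have "inverse (fls_const c + z) ^ (N - 1) = 1 + (z - y) * inverse (fls_const c + y)" for c
  proof -
    have "(fls_const c + z) ^ N = (fls_const c + z) * (fls_const c + z) ^ (N - 1)"
      by (simp add: N_def flip: power_Suc)
    then have "inverse (fls_const c + z) ^ (N - 1) = (fls_const c + z) / (fls_const c + y)"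
      using nz[of c] by (simp add: frob inverse_eq_divide power_one_over)
    also have "\<dots> = 1 + (z - y) * inverse (fls_const c + y)"
      using nzy[of c] by (simp add: field_simps)
    finally show ?thesis .
  qed
  then have "inverse_translate_sum (N - 1) z =
      of_nat CARD('a) + (z - y) * (\<Sum>c\<in>UNIV. inverse (fls_const c + y))"
    by (simp add: inverse_translate_sum_def sum.distrib sum_distrib_left)
  also have "\<dots> = - ((z - y) / (\<Prod>c\<in>UNIV. fls_const c + y))"
    by (simp add: fls_of_nat of_nat_card_eq_0 sum_inverse_fls_const_add nzy)
  also have "\<dots> = (y - z) / (\<Prod>c\<in>UNIV. fls_const c + y)"
    by (metis minus_diff_eq minus_divide_left)
  finally show ?thesis unfolding N_def y_def .
qed

lemma absinf_inverse_translate_sum: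
  fixes z :: "'a::{finite,field} fls"
  assumes z: "absinf z > 1" and n: "n \<ge> 1"
  shows "absinf (inverse_translate_sum (CARD('a) ^ n - 1) z) =
         absinf z powr (real CARD('a) ^ n * (1 - real CARD('a)))"
proof -
  define N where "N = CARD('a) ^ n"
  define y where "y = z ^ N"
  have "N \<ge> 2"
    unfolding N_def using n by (intro order.trans[OF card_UNIV_ge_2 self_le_power]) auto
  then have y: "absinf z < absinf y"
    using power_strict_increasing[of 1 N "absinf z"] z by (simp add: y_def absinf_power)
  have "absinf (inverse_translate_sum (N - 1) z) =
        absinf (y - z) / absinf (\<Prod>c\<in>UNIV. fls_const c + y)"
    unfolding N_def y_def inverse_translate_sum_eq[OF fls_const_add_nonzero[OF z]] absinf_divide ..
  also have "absinf (y - z) = absinf y"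
    using absinf_add_eq_right[of "- z" y] y by simp
  also have "absinf (\<Prod>c\<in>UNIV. fls_const c + y) = absinf y ^ CARD('a)"
    using y z by (simp add: absinf_prod absinf_const_add)
  also have "absinf y / absinf y ^ CARD('a) = absinf z ^ N / (absinf z ^ N) ^ CARD('a)"
    by (simp add: y_def absinf_power)
  also have "\<dots> = absinf z powr real N / absinf z powr real (N * CARD('a))"
    using z by (simp add: powr_realpow power_mult del: of_nat_mult)
  also have "\<dots> = absinf z powr (real N * (1 - real CARD('a)))"
    by (simp add: algebra_simps flip: powr_diff)
  finally show ?thesis by (simp add: N_def)
qed

lemma sum_PiE_insert:
  assumes "x \<notin> S"
  shows "(\<Sum>h\<in>PiE (insert x S) T. F h) = (\<Sum>g\<in>PiE S T. \<Sum>y\<in>T x. F (g(x := y)))"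
proof -
  have "inj_on (\<lambda>(y, g). g(x := y)) (T x \<times> PiE S T)"
    by (rule inj_combinator[OF assms])
  then have "(\<Sum>h\<in>PiE (insert x S) T. F h) = (\<Sum>(y, g)\<in>T x \<times> PiE S T. F (g(x := y)))"
    by (simp add: PiE_insert_eq sum.reindex case_prod_unfold)
  also have "\<dots> = (\<Sum>g\<in>PiE S T. \<Sum>y\<in>T x. F (g(x := y)))"
    by (simp add: sum.swap[of _ "T x"] sum.cartesian_product)
  finally show ?thesis .
qed

lemma Omega_eq_sum_inverse_translate_sum:
  fixes \<alpha> :: "nat \<Rightarrow> 'a::{finite,field} fls"
  assumes "i \<ge> 1" and "\<alpha> 0 = 1"
  shows "Omega \<alpha> i m = (\<Sum>g\<in>{1..<i} \<rightarrow>\<^sub>E UNIV.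
           inverse_translate_sum m ((\<Sum>j\<in>{1..<i}. fls_const (g j) * \<alpha> j) + \<alpha> i))"
proof -
  have I: "{..<i} = insert 0 {1..<i}"
    using assms(1) by auto
  have first: "(\<Sum>j<i. fls_const ((g(0 := c)) j) * \<alpha> j) =
        fls_const c + (\<Sum>j\<in>{1..<i}. fls_const (g j) * \<alpha> j)" for g c
    unfolding I using assms(2) by (simp add: sum.insert)
  have "Omega \<alpha> i m = (\<Sum>h\<in>PiE (insert 0 {1..<i}) (\<lambda>_. UNIV).
          inverse ((\<Sum>j<i. fls_const (h j) * \<alpha> j) + \<alpha> i) ^ m)"
    unfolding Omega_def I[symmetric] ..
  also have "\<dots> = (\<Sum>g\<in>{1..<i} \<rightarrow>\<^sub>E UNIV. \<Sum>c\<in>UNIV.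
          inverse ((\<Sum>j<i. fls_const ((g(0 := c)) j) * \<alpha> j) + \<alpha> i) ^ m)"
    by (rule sum_PiE_insert) simp
  also have "\<dots> = (\<Sum>g\<in>{1..<i} \<rightarrow>\<^sub>E UNIV.
           inverse_translate_sum m ((\<Sum>j\<in>{1..<i}. fls_const (g j) * \<alpha> j) + \<alpha> i))"
    by (simp only: first inverse_translate_sum_def add.assoc)
  finally show ?thesis .
qed

lemma one_less_absinf_basis:
  fixes \<alpha> :: "nat \<Rightarrow> 'a::{finite,field} fls"
  assumes "strict_mono (\<lambda>i. absinf (\<alpha> i))" and "\<alpha> 0 = 1" and "i \<ge> 1"
  shows "absinf (\<alpha> i) > 1"
  using strict_monoD[OF assms(1), of 0 i] assms(2,3) by simp

lemma absinf_translate_eq: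
  fixes \<alpha> :: "nat \<Rightarrow> 'a::{finite,field} fls"
  assumes incr: "strict_mono (\<lambda>i. absinf (\<alpha> i))" and "\<alpha> 0 = 1" and "i \<ge> 1"
  shows "absinf ((\<Sum>j\<in>{1..<i}. fls_const (g j) * \<alpha> j) + \<alpha> i) = absinf (\<alpha> i)"
proof (rule absinf_add_eq_right, rule absinf_sum_less)
  fix j assume "j \<in> {1..<i}"
  then have "absinf (\<alpha> j) < absinf (\<alpha> i)"
    using strict_monoD[OF incr] by simp
  then show "absinf (fls_const (g j) * \<alpha> j) < absinf (\<alpha> i)"
    unfolding absinf_mult
    by (rule order.strict_trans1[OF mult_left_le_one_le[OF absinf_nonneg absinf_nonneg
                                                          absinf_const_le_1]])
next
  show "absinf (\<alpha> i) > 0"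
    using one_less_absinf_basis[OF assms] by simp
qed

lemma absinf_Omega_le:
  fixes \<alpha> :: "nat \<Rightarrow> 'a::{finite,field} fls"
  assumes incr: "strict_mono (\<lambda>i. absinf (\<alpha> i))" and \<alpha>0: "\<alpha> 0 = 1" and i: "i \<ge> 1"
    and n: "n \<ge> 1"
  shows "absinf (Omega \<alpha> i (CARD('a) ^ n - 1))
           \<le> absinf (\<alpha> i) powr (real CARD('a) ^ n * (1 - real CARD('a)))"
  unfolding Omega_eq_sum_inverse_translate_sum[of i \<alpha>, OF i \<alpha>0]
proof (rule absinf_sum_le)
  fix g :: "nat \<Rightarrow> 'a"
  define z where "z = (\<Sum>j\<in>{1..<i}. fls_const (g j) * \<alpha> j) + \<alpha> i"
  have "absinf z = absinf (\<alpha> i)"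
    unfolding z_def by (rule absinf_translate_eq[OF incr \<alpha>0 i])
  then show "absinf (inverse_translate_sum (CARD('a) ^ n - 1) z)
               \<le> absinf (\<alpha> i) powr (real CARD('a) ^ n * (1 - real CARD('a)))"
    using absinf_inverse_translate_sum[OF _ n, of z] one_less_absinf_basis[OF incr \<alpha>0 i] by simp
qed simp

theorem lemma5:
  fixes f :: "'a::{finite,field} fls" and ap :: "'a poly" and b :: 'a
    and \<alpha> :: "nat \<Rightarrow> 'a fls" and I :: "'a fls set" and d :: nat
  defines "q \<equiv> CARD('a)"
  assumes monic: "lead_coeff ap = 1" and deg: "degree ap = d" and d1: "d \<ge> 1"
    and b0: "b \<noteq> 0"
    and froot: "f ^ 2 - Tpoly ap * f - fls_const b = 0"
    and fnotk: "f \<notin> kfield"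
    and fabs: "absinf f = real q ^ d"
    and ideal: "frac_ideal (Ainf1 f d) (Kfield f) I"
    and basis: "Fq_basis \<alpha> I" and alpha0: "\<alpha> 0 = 1"
    and incr: "strict_mono (\<lambda>i. absinf (\<alpha> i))"
  shows "\<forall>n::nat. n \<ge> 1 \<longrightarrow>
     Omega \<alpha> 1 (q ^ n - 1) =
        (\<alpha> 1 ^ (q ^ n) - \<alpha> 1) / (\<Prod>c\<in>(UNIV::'a set). fls_const c + \<alpha> 1 ^ (q ^ n))
     \<and> absinf (Omega \<alpha> 1 (q ^ n - 1)) = absinf (\<alpha> 1) powr (real q ^ n * (1 - real q))
     \<and> (\<forall>i\<ge>1. absinf (Omega \<alpha> i (q ^ n - 1)) \<le> absinf (\<alpha> i) powr (real q ^ n * (1 - real q)))"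
proof (intro allI impI conjI)
  fix n :: nat
  assume n: "n \<ge> 1"
  have \<alpha>1: "absinf (\<alpha> 1) > 1"
    by (rule one_less_absinf_basis[OF incr alpha0]) simp
  have Omega1: "Omega \<alpha> 1 m = inverse_translate_sum m (\<alpha> 1)" for m
    using Omega_eq_sum_inverse_translate_sum[of 1 \<alpha> m] alpha0 by simp
  show "Omega \<alpha> 1 (q ^ n - 1) =
        (\<alpha> 1 ^ (q ^ n) - \<alpha> 1) / (\<Prod>c\<in>(UNIV::'a set). fls_const c + \<alpha> 1 ^ (q ^ n))"
    unfolding Omega1 q_def by (rule inverse_translate_sum_eq[OF fls_const_add_nonzero[OF \<alpha>1]])
  show "absinf (Omega \<alpha> 1 (q ^ n - 1)) = absinf (\<alpha> 1) powr (real q ^ n * (1 - real q))"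
    unfolding Omega1 q_def by (rule absinf_inverse_translate_sum[OF \<alpha>1 n])
  fix i :: nat
  assume "i \<ge> 1"
  then show "absinf (Omega \<alpha> i (q ^ n - 1)) \<le> absinf (\<alpha> i) powr (real q ^ n * (1 - real q))"
    unfolding q_def by (rule absinf_Omega_le[OF incr alpha0 _ n])
qed

end
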